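(* Let $\Sigma=(X,U,F)$ be a system and $Q\subset X$ a controlled invariant set. If $K\subset Q$ and $K=\bigcup_{i=1}^m K_i$ with nonempty $K_1,\dots,K_m$, then \[h_{inv}(K,Q)=\max_{i=1,\ldots,m}h_{inv}(K_i,Q).\]
   Context: A system is a triple $\Sigma=(X,U,F)$ where $X,U$ are nonempty sets and $F:X\times U\rightrightarrows X$ is a set-valued map with $F(x,u)\neq\emptyset$ for all $(x,u)$. For $A\subset X$ and $u\in U$, $F(A,u)=\bigcup_{x\in A}F(x,u)$. A set $Q\subset X$ is controlled invariant if for every $x\in Q$ there is $u\in U$ with $F(x,u)\subset Q$. For $u\in U$ put $Q_u=\{x\in Q: F(x,u)\subset Q\}$. Elements of $U^n$ are written $\omega=\omega_0\omega_1\cdots\omega_{n-1}$, and $\omega_{[0,i]}=\omega_0\cdots\omega_i$. A set $S\subset U^n$ is an admissible family of length $n$ for $Q$ if (a) $\omega'_0=\omega''_0$ for all $\omega',\omega''\in S$, and (b) there exists $x\in Q$ such that for every $\omega\in S$, with $I^0_\omega(x)=\{x\}$: for all $i=0,1,\dots,n-2$, $F(I^i_\omega(x),\omega_i)\subset\bigcup_{\omega'\in S,\ \omega'_{[0,i]}=\omega_{[0,i]}}Q_{\omega'_{i+1}}$ and $I^{i+1}_\omega(x):=F(I^i_\omega(x),\omega_i)\cap Q_{\omega_{i+1}}\neq\emptyset$; and $I^n_\omega(x):=F(I^{n-1}_\omega(x),\omega_{n-1})\subset Q$. Let $AF^n(Q)$ be the set of admissible families of length $n$ for $Q$, and for $S\in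 AF^n(Q)$ let $Q_S$ be the set of all $x\in Q$ satisfying (b). For nonempty $K\subset Q$, a set $\mathscr{S}\subset U^n$ is $(n,K,Q)$-spanning if $K\subset\bigcup_{S\subset\mathscr{S},\,S\in AF^n(Q)}Q_S$. Let $r_{inv}(n,K,Q)=\inf\{\sharp\mathscr{S}:\mathscr{S}\text{ is }(n,K,Q)\text{-spanning}\}$ (with $\inf\emptyset=\infty$), and the invariance entropy $h_{inv}(K,Q)=\limsup_{n\to\infty}\frac1n\log r_{inv}(n,K,Q)$, where $\log$ is base $2$. *)

theory Defs
  imports Complex_Main "HOL-Library.Extended_Nat" "HOL-Library.Extended_Real"
    "HOL-Library.Liminf_Limsup"
begin

definition is_system :: "'x set \<Rightarrow> 'u set \<Rightarrow> ('x \<Rightarrow> 'u \<Rightarrow> 'x set) \<Rightarrow> bool" where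
  "is_system X U F \<longleftrightarrow> X \<noteq> {} \<and> U \<noteq> {} \<and>
     (\<forall>x\<in>X. \<forall>u\<in>U. F x u \<noteq> {} \<and> F x u \<subseteq> X)"

definition Fimg :: "('x \<Rightarrow> 'u \<Rightarrow> 'x set) \<Rightarrow> 'x set \<Rightarrow> 'u \<Rightarrow> 'x set" where
  "Fimg F A u = (\<Union>x\<in>A. F x u)"

definition controlled_invariant :: "'u set \<Rightarrow> ('x \<Rightarrow> 'u \<Rightarrow> 'x set) \<Rightarrow> 'x set \<Rightarrow> bool" where
  "controlled_invariant U F Q \<longleftrightarrow> (\<forall>x\<in>Q. \<exists>u\<in>U. F x u \<subseteq> Q)"

definition Qu :: "('x \<Rightarrow> 'u \<Rightarrow> 'x set) \<Rightarrow> 'x set \<Rightarrow> 'u \<Rightarrow> 'x set" where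
  "Qu F Q u = {x\<in>Q. F x u \<subseteq> Q}"

text \<open>Words of length n over U are lists; \<open>\<omega> ! i\<close> is \<open>\<omega>_i\<close>, \<open>take (i+1) \<omega>\<close> is \<open>\<omega>_[0,i]\<close>.\<close>
definition words :: "'u set \<Rightarrow> nat \<Rightarrow> 'u list set" where
  "words U n = {\<omega>. length \<omega> = n \<and> set \<omega> \<subseteq> U}"

fun Iset :: "('x \<Rightarrow> 'u \<Rightarrow> 'x set) \<Rightarrow> 'x set \<Rightarrow> 'u list \<Rightarrow> 'x \<Rightarrow> nat \<Rightarrow> 'x set" where
  "Iset F Q \<omega> x 0 = {x}"
| "Iset F Q \<omega> x (Suc i) =
     (if Suc i < length \<omega> then Fimg F (Iset F Q \<omega> x i) (\<omega> ! i) \<inter> Qu F Q (\<omega> ! Suc i)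
      else Fimg F (Iset F Q \<omega> x i) (\<omega> ! i))"

definition adm_point :: "('x \<Rightarrow> 'u \<Rightarrow> 'x set) \<Rightarrow> 'x set \<Rightarrow> nat \<Rightarrow> 'u list set \<Rightarrow> 'x \<Rightarrow> bool" where
  "adm_point F Q n S x \<longleftrightarrow> x \<in> Q \<and>
    (\<forall>\<omega>\<in>S.
       (\<forall>i. Suc i < n \<longrightarrow>
          Fimg F (Iset F Q \<omega> x i) (\<omega> ! i)
            \<subseteq> (\<Union>\<omega>'\<in>{\<omega>'\<in>S. take (Suc i) \<omega>' = take (Suc i) \<omega>}. Qu F Q (\<omega>' ! Suc i))
          \<and> Iset F Q \<omega> x (Suc i) \<noteq> {})
       \<and> Iset F Q \<omega> x n \<subseteq> Q)"

definition AF :: "'u set \<Rightarrow> ('x \<Rightarrow> 'u \<Rightarrow> 'x set) \<Rightarrow> 'x set \<Rightarrow> nat \<Rightarrow> 'u list set set" where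
  "AF U F Q n = {S. S \<noteq> {} \<and> S \<subseteq> words U n
       \<and> (\<forall>\<omega>'\<in>S. \<forall>\<omega>''\<in>S. \<omega>' ! 0 = \<omega>'' ! 0)
       \<and> (\<exists>x\<in>Q. adm_point F Q n S x)}"

definition QS :: "('x \<Rightarrow> 'u \<Rightarrow> 'x set) \<Rightarrow> 'x set \<Rightarrow> nat \<Rightarrow> 'u list set \<Rightarrow> 'x set" where
  "QS F Q n S = {x\<in>Q. adm_point F Q n S x}"

definition spanning :: "'u set \<Rightarrow> ('x \<Rightarrow> 'u \<Rightarrow> 'x set) \<Rightarrow> nat \<Rightarrow> 'x set \<Rightarrow> 'x set \<Rightarrow> 'u list set \<Rightarrow> bool" where
  "spanning U F n K Q SS \<longleftrightarrow> SS \<subseteq> words U n \<and>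
     K \<subseteq> (\<Union>S\<in>{S. S \<subseteq> SS \<and> S \<in> AF U F Q n}. QS F Q n S)"

definition ecard :: "'a set \<Rightarrow> enat" where
  "ecard A = (if finite A then enat (card A) else \<infinity>)"

text \<open>Inf over the empty set is \<infinity> in enat.\<close>
definition r_inv :: "'u set \<Rightarrow> ('x \<Rightarrow> 'u \<Rightarrow> 'x set) \<Rightarrow> nat \<Rightarrow> 'x set \<Rightarrow> 'x set \<Rightarrow> enat" where
  "r_inv U F n K Q = Inf (ecard ` {SS. spanning U F n K Q SS})"

definition elog2 :: "enat \<Rightarrow> ereal" where
  "elog2 r = (case r of \<infinity> \<Rightarrow> \<infinity> | enat k \<Rightarrow> (if k = 0 then -\<infinity> else ereal (log 2 (real k))))"

definition h_inv :: "'u set \<Rightarrow> ('x \<Rightarrow> 'u \<Rightarrow> 'x set) \<Rightarrow> 'x set \<Rightarrow> 'x set \<Rightarrow> ereal" where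
  "h_inv U F K Q = limsup (\<lambda>n. ereal (1 / real n) * elog2 (r_inv U F n K Q))"

end

theory Submission
  imports Defs "HOL-Analysis.Extended_Real_Limits"
begin

text \<open>
  A spanning set for \<open>K\<close> also spans every subset of \<open>K\<close>, so \<open>h_inv (K\<^sub>i, Q) \<le> h_inv (K, Q)\<close>.
  Conversely, the union of spanning sets for the \<open>K\<^sub>i\<close> spans \<open>K\<close>, so
  \<open>r_inv (n, K, Q) \<le> \<Sum>\<^sub>i r_inv (n, K\<^sub>i, Q) \<le> m \<cdot> max\<^sub>i r_inv (n, K\<^sub>i, Q)\<close>.
  After taking \<open>log\<close> and dividing by \<open>n\<close>, the term \<open>log m / n\<close> vanishes in the limit, and
  the limsup of a finite maximum of sequences is the maximum of their limsups.
\<close>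

lemma spanning_subset:
  "K' \<subseteq> K \<Longrightarrow> spanning U F n K Q SS \<Longrightarrow> spanning U F n K' Q SS"
  unfolding spanning_def by blast

lemma spanning_Un:
  assumes "spanning U F n A Q SA" and "spanning U F n B Q SB"
  shows "spanning U F n (A \<union> B) Q (SA \<union> SB)"
proof -
  have "(\<Union>S\<in>{S. S \<subseteq> SA \<and> S \<in> AF U F Q n}. QS F Q n S)
      \<union> (\<Union>S\<in>{S. S \<subseteq> SB \<and> S \<in> AF U F Q n}. QS F Q n S)
      \<subseteq> (\<Union>S\<in>{S. S \<subseteq> SA \<union> SB \<and> S \<in> AF U F Q n}. QS F Q n S)"
    by (intro Un_least SUP_subset_mono) auto
  with assms show ?thesis
    unfolding spanning_def by blast
qed

lemma spanning_empty: "spanning U F n {} Q {}"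
  unfolding spanning_def by simp

lemma ecard_Un_le: "ecard (A \<union> B) \<le> ecard A + ecard B"
  unfolding ecard_def using card_Un_le[of A B] by auto

lemma r_inv_le_ecard: "spanning U F n K Q SS \<Longrightarrow> r_inv U F n K Q \<le> ecard SS"
  unfolding r_inv_def by (blast intro: Inf_lower)

lemma r_inv_mono: "K' \<subseteq> K \<Longrightarrow> r_inv U F n K' Q \<le> r_inv U F n K Q"
  unfolding r_inv_def by (intro Inf_superset_mono image_mono) (auto intro: spanning_subset)

lemma r_inv_attained:
  assumes "r_inv U F n K Q \<noteq> \<infinity>"
  obtains SS where "spanning U F n K Q SS" and "ecard SS = r_inv U F n K Q"
proof -
  from assms obtain SS where "spanning U F n K Q SS"
    unfolding r_inv_def by (metis Collect_empty_eq Inf_empty image_empty top_enat_def)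
  then have "ecard SS \<in> ecard ` {SS. spanning U F n K Q SS}" by blast
  from wellorder_InfI[OF this] show thesis
    using that unfolding r_inv_def by auto
qed

lemma r_inv_Un_le: "r_inv U F n (A \<union> B) Q \<le> r_inv U F n A Q + r_inv U F n B Q"
proof (cases "r_inv U F n A Q = \<infinity> \<or> r_inv U F n B Q = \<infinity>")
  case True
  then show ?thesis by auto
next
  case False
  then obtain SA SB where
    SA: "spanning U F n A Q SA" "ecard SA = r_inv U F n A Q" and
    SB: "spanning U F n B Q SB" "ecard SB = r_inv U F n B Q"
    by (metis r_inv_attained)
  have "r_inv U F n (A \<union> B) Q \<le> ecard (SA \<union> SB)"
    using spanning_Un[OF SA(1) SB(1)] by (rule r_inv_le_ecard)
  also have "\<dots> \<le> r_inv U F n A Q + r_inv U F n B Q"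
    using ecard_Un_le SA(2) SB(2) by metis
  finally show ?thesis .
qed

lemma r_inv_empty: "r_inv U F n {} Q = 0"
  using r_inv_le_ecard[OF spanning_empty, of U F n Q] by (simp add: ecard_def flip: zero_enat_def)

lemma r_inv_UN_le_sum:
  "finite I \<Longrightarrow> r_inv U F n (\<Union>i\<in>I. Ks i) Q \<le> (\<Sum>i\<in>I. r_inv U F n (Ks i) Q)"
proof (induction I rule: finite_induct)
  case empty
  then show ?case by (simp add: r_inv_empty)
next
  case (insert a I)
  have "r_inv U F n (\<Union>i\<in>insert a I. Ks i) Q
      \<le> r_inv U F n (Ks a) Q + r_inv U F n (\<Union>i\<in>I. Ks i) Q"
    using r_inv_Un_le by simp
  also have "\<dots> \<le> r_inv U F n (Ks a) Q + (\<Sum>i\<in>I. r_inv U F n (Ks i) Q)"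
    using insert.IH by (rule add_left_mono)
  finally show ?case
    using insert.hyps by simp
qed

lemma elog2_mono: "a \<le> b \<Longrightarrow> elog2 a \<le> elog2 b"
  unfolding elog2_def by (cases a; cases b) auto

lemma elog2_mult_enat:
  assumes "1 \<le> c"
  shows "elog2 (enat c * k) = ereal (log 2 (real c)) + elog2 k"
  using assms by (cases k) (auto simp: elog2_def log_mult)

lemma elog2_sum_le:
  assumes "finite I" and "I \<noteq> {}"
  shows "elog2 (\<Sum>i\<in>I. r i) \<le> ereal (log 2 (real (card I))) + (MAX i\<in>I. elog2 (r i))"
proof -
  have "(\<Sum>i\<in>I. r i) \<le> enat (card I) * (MAX i\<in>I. r i)"
    using sum_bounded_above[of I r "MAX i\<in>I. r i"] assms by (simp add: of_nat_eq_enat)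
  then have "elog2 (\<Sum>i\<in>I. r i) \<le> elog2 (enat (card I) * (MAX i\<in>I. r i))"
    by (rule elog2_mono)
  also have "\<dots> = ereal (log 2 (real (card I))) + elog2 (MAX i\<in>I. r i)"
    using assms by (simp add: elog2_mult_enat Suc_le_eq card_gt_0_iff)
  also have "elog2 (MAX i\<in>I. r i) = (MAX i\<in>I. elog2 (r i))"
    using assms by (simp add: mono_Max_commute[of elog2] monoI elog2_mono image_image)
  finally show ?thesis .
qed

lemma Limsup_Max:
  fixes f :: "'i \<Rightarrow> 'a \<Rightarrow> 'b::complete_linorder"
  assumes "finite I" and "I \<noteq> {}"
  shows "Limsup F (\<lambda>x. MAX i\<in>I. f i x) = (MAX i\<in>I. Limsup F (f i))"
proof (rule antisym)
  show "Limsup F (\<lambda>x. MAX i\<in>I. f i x) \<le> (MAX i\<in>I. Limsup F (f i))"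
  proof (subst Limsup_le_iff, intro allI impI)
    fix y assume "(MAX i\<in>I. Limsup F (f i)) < y"
    then have "\<forall>i\<in>I. eventually (\<lambda>x. f i x < y) F"
      using assms by (auto intro: Limsup_lessD)
    then have "eventually (\<lambda>x. \<forall>i\<in>I. f i x < y) F"
      by (rule eventually_ball_finite[OF assms(1)])
    then show "eventually (\<lambda>x. (MAX i\<in>I. f i x) < y) F"
      by eventually_elim (use assms in auto)
  qed
  show "(MAX i\<in>I. Limsup F (f i)) \<le> Limsup F (\<lambda>x. MAX i\<in>I. f i x)"
    using assms by (auto intro!: Max.boundedI Limsup_mono always_eventually)
qed

lemma ereal_distrib_left_real: "ereal a * (ereal b + x) = ereal (a * b) + ereal a * x"
  by (cases x) (simp_all add: distrib_left)

lemma ereal_mult_Max: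
  assumes "0 \<le> c" and "finite I" and "I \<noteq> {}"
  shows "ereal c * (MAX i\<in>I. f i) = (MAX i\<in>I. ereal c * f i)"
proof -
  have "mono (times (ereal c))"
    using assms(1) by (intro monoI ereal_mult_left_mono) simp_all
  from mono_Max_commute[OF this, of "f ` I"] assms(2,3) show ?thesis
    by (simp add: image_image)
qed

definition log_growth :: "(nat \<Rightarrow> enat) \<Rightarrow> ereal" where
  "log_growth r = limsup (\<lambda>n. ereal (1 / real n) * elog2 (r n))"

lemma h_inv_eq_log_growth: "h_inv U F K Q = log_growth (\<lambda>n. r_inv U F n K Q)"
  unfolding h_inv_def log_growth_def ..

lemma log_growth_mono: "(\<And>n. r n \<le> s n) \<Longrightarrow> log_growth r \<le> log_growth s"
  unfolding log_growth_def
  by (intro Limsup_mono always_eventually allI ereal_mult_left_mono elog2_mono) simp_all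

lemma log_growth_sum:
  assumes "finite I" and "I \<noteq> {}"
  shows "log_growth (\<lambda>n. \<Sum>i\<in>I. r i n) = (MAX i\<in>I. log_growth (r i))"
proof (rule antisym)
  define c where "c = log 2 (real (card I))"
  have "ereal (1 / real n) * elog2 (\<Sum>i\<in>I. r i n)
      \<le> ereal (c / real n) + (MAX i\<in>I. ereal (1 / real n) * elog2 (r i n))" for n
  proof -
    have "ereal (1 / real n) * elog2 (\<Sum>i\<in>I. r i n)
        \<le> ereal (1 / real n) * (ereal c + (MAX i\<in>I. elog2 (r i n)))"
      unfolding c_def using assms by (intro ereal_mult_left_mono elog2_sum_le) simp_all
    also have "\<dots> = ereal (c / real n) + ereal (1 / real n) * (MAX i\<in>I. elog2 (r i n))"
      by (simp add: ereal_distrib_left_real)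
    also have "ereal (1 / real n) * (MAX i\<in>I. elog2 (r i n))
        = (MAX i\<in>I. ereal (1 / real n) * elog2 (r i n))"
      using assms by (intro ereal_mult_Max) simp_all
    finally show ?thesis .
  qed
  then have "log_growth (\<lambda>n. \<Sum>i\<in>I. r i n)
      \<le> limsup (\<lambda>n. ereal (c / real n) + (MAX i\<in>I. ereal (1 / real n) * elog2 (r i n)))"
    unfolding log_growth_def by (intro Limsup_mono always_eventually allI)
  also have "\<dots> = limsup (\<lambda>n. MAX i\<in>I. ereal (1 / real n) * elog2 (r i n))"
    using ereal_limsup_lim_add[of "\<lambda>n. ereal (c / real n)" 0]
    by (simp add: lim_const_over_n zero_ereal_def)
  also have "\<dots> = (MAX i\<in>I. log_growth (r i))"
    unfolding log_growth_def using assms by (rule Limsup_Max)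
  finally show "log_growth (\<lambda>n. \<Sum>i\<in>I. r i n) \<le> (MAX i\<in>I. log_growth (r i))" .
  show "(MAX i\<in>I. log_growth (r i)) \<le> log_growth (\<lambda>n. \<Sum>i\<in>I. r i n)"
    using assms by (auto intro!: Max.boundedI log_growth_mono member_le_sum)
qed

theorem proposition2p7:
  fixes X :: "'x set" and U :: "'u set" and F :: "'x \<Rightarrow> 'u \<Rightarrow> 'x set"
    and Q K :: "'x set" and Ks :: "nat \<Rightarrow> 'x set" and m :: nat
  assumes "is_system X U F"
    and "Q \<subseteq> X"
    and "controlled_invariant U F Q"
    and "K \<subseteq> Q"
    and "m \<ge> 1"
    and "K = (\<Union>i\<in>{1..m}. Ks i)"
    and "\<forall>i\<in>{1..m}. Ks i \<noteq> {}"
  shows "h_inv U F K Q = Max ((\<lambda>i. h_inv U F (Ks i) Q) ` {1..m})"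
proof (rule antisym)
  have indices: "finite {1..m}" "{1..m} \<noteq> {}"
    using \<open>m \<ge> 1\<close> by auto
  have "h_inv U F K Q \<le> log_growth (\<lambda>n. \<Sum>i\<in>{1..m}. r_inv U F n (Ks i) Q)"
    unfolding h_inv_eq_log_growth \<open>K = (\<Union>i\<in>{1..m}. Ks i)\<close>
    by (rule log_growth_mono, rule r_inv_UN_le_sum[OF indices(1)])
  also have "\<dots> = Max ((\<lambda>i. h_inv U F (Ks i) Q) ` {1..m})"
    unfolding h_inv_eq_log_growth
    by (rule log_growth_sum[OF indices, of "\<lambda>i n. r_inv U F n (Ks i) Q"])
  finally show "h_inv U F K Q \<le> Max ((\<lambda>i. h_inv U F (Ks i) Q) ` {1..m})" .
  have "h_inv U F (Ks i) Q \<le> h_inv U F K Q" if "i \<in> {1..m}" for i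
    unfolding h_inv_eq_log_growth
    by (rule log_growth_mono, rule r_inv_mono) (use that \<open>K = (\<Union>i\<in>{1..m}. Ks i)\<close> in blast)
  then show "Max ((\<lambda>i. h_inv U F (Ks i) Q) ` {1..m}) \<le> h_inv U F K Q"
    using indices by (simp add: Max.boundedI)
qed

end
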